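(* Let $n,N\ge 1$ be integers. For $c\in\{a,b\}$ let $\alpha^{(c)}\in\mathbb{R}^n$ have strictly positive entries and let $\beta^{(c)}=(\beta_{c,1},\dots,\beta_{c,n})$ with $0\le\beta_{c,i}<1$. Let $\mathcal{A}$ (for resource $a$) and $\mathcal{B}$ (for resource $b$) be finite sets of AIMD matrices built from $(\alpha^{(a)},\beta^{(a)})$ and $(\alpha^{(b)},\beta^{(b)})$ respectively, each containing the corresponding full-decrease drop matrix, denoted $A_1\in\mathcal{A}$ and $B_1\in\mathcal{B}$. Let $\mathcal{A}_\Gamma$ be the set of all matrices $\Gamma=\mathrm{diag}(\gamma_a,\gamma_b)\in\mathbb{R}^{2nN\times 2nN}$ where $\gamma_a$ is built from some $C_1,\dots,C_N\in\mathcal{A}$ and $\gamma_b$ from some $C_1,\dots,C_N\in\mathcal{B}$ as described in the context. Let $\Gamma_1\in\mathcal{A}_\Gamma$ be the matrix obtained by taking $C_1=\dots=C_N=A_1$ for $\gamma_a$ and $C_1=\dots=C_N=B_1$ for $\gamma_b$. Then: (a) For all $\Gamma\in\mathcal{A}_\Gamma$ and all $\zeta\in\mathbb{R}^{2nN}$, $\|\Gamma\zeta\|_{N,1}\le\|\zeta\|_{N,1}$. (b) The subspace $\mathcal{E}=\{\zeta=[z_a^\top\; z_b^\top]^\top\in\mathbb{R}^{2nN}: e^\top z_{a,1}=e^\top z_{b,1}=0\}$ is invariant under every $\Gamma\in\mathcal{A}_\Gamma$. (c) For all $\zeta\in\mathcal{E}$, $\|\Gamma_1\zeta\|_{N,1}\le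 q\|\zeta\|_{N,1}$, where $$q=\max\left(\frac1N\sum_{i=1}^N\beta_a^i,\ \frac1N\sum_{j=1}^N\beta_b^j\right)<1,$$ with $\beta_c=\max_{i}\beta_{c,i}$ the multiplicative-decrease parameter of resource $c\in\{a,b\}$.
   Context: $e=(1,\dots,1)^\top\in\mathbb{R}^n$. An AIMD matrix built from a growth vector $\alpha\in\mathbb{R}^n_{>0}$ and decrease parameters $\beta_1,\dots,\beta_n\in[0,1)$ is a matrix of the form $A=\mathrm{diag}(\tilde\beta)+(e^\top\alpha)^{-1}\alpha(e^\top-\tilde\beta^\top)$ where $\tilde\beta=(\tilde\beta_1,\dots,\tilde\beta_n)^\top$ with each $\tilde\beta_i\in\{\beta_i,1\}$; these matrices are nonnegative and column stochastic. The full-decrease drop matrix is the one with $\tilde\beta_i=\beta_i$ for all $i$. Given $C_1,\dots,C_N\in\mathbb{R}^{n\times n}$, set $P_m=C_mC_{m-1}\cdots C_1$ for $m=1,\dots,N$, and define $\gamma\in\mathbb{R}^{nN\times nN}$ as the $N\times N$ block matrix (blocks of size $n\times n$) whose $k$-th block in the first block column is $\frac1k\sum_{i=0}^{k-1}P_{N-i}$ ($k=1,\dots,N$) and all other blocks are zero. A vector $\zeta\in\mathbb{R}^{2nN}$ is written $\zeta=[z_a^\top\;z_b^\top]^\top$ with $z_c=[z_{c,1}^\top,\dots,z_{c,N}^\top]^\top$, $z_{c,k}\in\mathbb{R}^n$. The norm is $\|\zeta\|_{N,1}=\max_{c\in\{a,b\},\,k=1,\dots,N}\|z_{c,k}\|_1$,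 where $\|\cdot\|_1$ is the 1-norm on $\mathbb{R}^n$. *)

theory Defs
  imports Complex_Main
begin

text \<open>Vectors are functions nat => real (only indices below the dimension matter);
  matrices are functions nat => nat => real, zero outside their size.
  Indices are 0-based internally; block numbers k are 1-based as in the paper.\<close>

definition aimd_entry :: "nat \<Rightarrow> (nat \<Rightarrow> real) \<Rightarrow> (nat \<Rightarrow> real) \<Rightarrow> nat \<Rightarrow> nat \<Rightarrow> real" where
  "aimd_entry n \<alpha> bt i j =
     (if i = j then bt i else 0) + \<alpha> i * (1 - bt j) / (\<Sum>k<n. \<alpha> k)"

text \<open>diag(bt) + (e^T alpha)^{-1} alpha (e^T - bt^T), as an n x n matrix\<close>
definition aimd_mat_of :: "nat \<Rightarrow> (nat \<Rightarrow> real) \<Rightarrow> (nat \<Rightarrow> real) \<Rightarrow> nat \<Rightarrow> nat \<Rightarrow> real" where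
  "aimd_mat_of n \<alpha> bt = (\<lambda>i j. if i < n \<and> j < n then aimd_entry n \<alpha> bt i j else 0)"

definition is_aimd_matrix :: "nat \<Rightarrow> (nat \<Rightarrow> real) \<Rightarrow> (nat \<Rightarrow> real) \<Rightarrow> (nat \<Rightarrow> nat \<Rightarrow> real) \<Rightarrow> bool" where
  "is_aimd_matrix n \<alpha> \<beta> A \<longleftrightarrow>
     (\<exists>bt. (\<forall>i<n. bt i = \<beta> i \<or> bt i = 1) \<and> A = aimd_mat_of n \<alpha> bt)"

definition drop_matrix :: "nat \<Rightarrow> (nat \<Rightarrow> real) \<Rightarrow> (nat \<Rightarrow> real) \<Rightarrow> nat \<Rightarrow> nat \<Rightarrow> real" where
  "drop_matrix n \<alpha> \<beta> = aimd_mat_of n \<alpha> \<beta>"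

definition mat_mult :: "nat \<Rightarrow> (nat \<Rightarrow> nat \<Rightarrow> real) \<Rightarrow> (nat \<Rightarrow> nat \<Rightarrow> real) \<Rightarrow> nat \<Rightarrow> nat \<Rightarrow> real" where
  "mat_mult n A B = (\<lambda>i j. \<Sum>k<n. A i k * B k j)"

definition mat_vec :: "nat \<Rightarrow> (nat \<Rightarrow> nat \<Rightarrow> real) \<Rightarrow> (nat \<Rightarrow> real) \<Rightarrow> nat \<Rightarrow> real" where
  "mat_vec m M x = (\<lambda>i. \<Sum>j<m. M i j * x j)"

definition id_mat :: "nat \<Rightarrow> nat \<Rightarrow> nat \<Rightarrow> real" where
  "id_mat n = (\<lambda>i j. if i < n \<and> i = j then 1 else 0)"

fun prodP :: "nat \<Rightarrow> (nat \<Rightarrow> nat \<Rightarrow> nat \<Rightarrow> real) \<Rightarrow> nat \<Rightarrow> nat \<Rightarrow> nat \<Rightarrow> real" where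
  "prodP n C 0 = id_mat n"
| "prodP n C (Suc m) = mat_mult n (C (Suc m)) (prodP n C m)"

text \<open>gamma (nN x nN): block row k (1-based), first block column is
  (1/k) sum_{i=0}^{k-1} P_{N-i}; all other blocks zero.\<close>
definition gamma :: "nat \<Rightarrow> nat \<Rightarrow> (nat \<Rightarrow> nat \<Rightarrow> nat \<Rightarrow> real) \<Rightarrow> nat \<Rightarrow> nat \<Rightarrow> real" where
  "gamma n N C = (\<lambda>r s.
     if r < n * N \<and> s < n then
       (let k = r div n + 1 in (1 / real k) * (\<Sum>i<k. prodP n C (N - i) (r mod n) s))
     else 0)"

definition diag2 :: "nat \<Rightarrow> (nat \<Rightarrow> nat \<Rightarrow> real) \<Rightarrow> (nat \<Rightarrow> nat \<Rightarrow> real) \<Rightarrow> nat \<Rightarrow> nat \<Rightarrow> real" where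
  "diag2 m M1 M2 = (\<lambda>i j.
     if i < m \<and> j < m then M1 i j
     else if m \<le> i \<and> i < 2 * m \<and> m \<le> j \<and> j < 2 * m then M2 (i - m) (j - m) else 0)"

definition Gamma_set :: "nat \<Rightarrow> nat \<Rightarrow> (nat \<Rightarrow> nat \<Rightarrow> real) set \<Rightarrow> (nat \<Rightarrow> nat \<Rightarrow> real) set
    \<Rightarrow> (nat \<Rightarrow> nat \<Rightarrow> real) set" where
  "Gamma_set n N AA BB =
     {diag2 (n * N) (gamma n N C) (gamma n N D) | C D.
        (\<forall>k\<in>{1..N}. C k \<in> AA) \<and> (\<forall>k\<in>{1..N}. D k \<in> BB)}"

text \<open>zeta = [z_a; z_b], z_c = [z_{c,1}; ...; z_{c,N}];
  z_{a,k} occupies indices (k-1)n .. kn-1, z_{b,k} occupies nN+(k-1)n .. nN+kn-1.\<close>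
definition z_block :: "nat \<Rightarrow> nat \<Rightarrow> (nat \<Rightarrow> real) \<Rightarrow> bool \<Rightarrow> nat \<Rightarrow> nat \<Rightarrow> real" where
  "z_block n N \<zeta> is_b k = (\<lambda>i. \<zeta> ((if is_b then n * N else 0) + (k - 1) * n + i))"

definition norm1 :: "nat \<Rightarrow> (nat \<Rightarrow> real) \<Rightarrow> real" where
  "norm1 n v = (\<Sum>i<n. \<bar>v i\<bar>)"

definition normN1 :: "nat \<Rightarrow> nat \<Rightarrow> (nat \<Rightarrow> real) \<Rightarrow> real" where
  "normN1 n N \<zeta> = Max {norm1 n (z_block n N \<zeta> c k) | c k. k \<in> {1..N}}"

definition E_space :: "nat \<Rightarrow> nat \<Rightarrow> (nat \<Rightarrow> real) set" where
  "E_space n N = {\<zeta>. (\<Sum>i<n. z_block n N \<zeta> False 1 i) = 0 \<and> (\<Sum>i<n. z_block n N \<zeta> True 1 i) = 0}"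

end

theory Submission
  imports Defs
begin

(* The k-th block of Gamma zeta is the average (1/k) sum_{i<k} P_{N-i} z_{c,1}, so everything
   reduces to the action of the products P_m on the first block. AIMD matrices are nonnegative
   and column stochastic, hence nonexpansive in the 1-norm and sum preserving; this gives (a)
   and (b). On zero-sum vectors the drop matrix contracts the 1-norm by beta_c, so P_m contracts
   by beta_c^m; and since beta_c^{N-i}, i < k, are the k smallest of beta_c, ..., beta_c^N,
   their mean is at most (1/N) sum_{i=1}^N beta_c^i. *)

definition col_stochastic :: "nat \<Rightarrow> (nat \<Rightarrow> nat \<Rightarrow> real) \<Rightarrow> bool" where
  "col_stochastic n M \<longleftrightarrow> (\<forall>i<n. \<forall>j<n. 0 \<le> M i j) \<and> (\<forall>j<n. (\<Sum>i<n. M i j) = 1)"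

lemma mat_vec_mat_mult: "mat_vec n (mat_mult n A B) z = mat_vec n A (mat_vec n B z)"
  unfolding mat_vec_def mat_mult_def
  by (auto simp: sum_distrib_left sum_distrib_right mult.assoc intro!: ext sum.swap)

lemma mat_vec_id_mat:
  assumes "i < n" shows "mat_vec n (id_mat n) z i = z i"
proof -
  have "mat_vec n (id_mat n) z i = (\<Sum>j<n. if i = j then z j else 0)"
    unfolding mat_vec_def id_mat_def using assms by (intro sum.cong) auto
  then show ?thesis using assms by simp
qed

lemma col_stochastic_id_mat: "col_stochastic n (id_mat n)"
  unfolding col_stochastic_def id_mat_def by (auto simp: sum.delta)

lemma col_stochastic_mat_mult:
  assumes A: "col_stochastic n A" and B: "col_stochastic n B"
  shows "col_stochastic n (mat_mult n A B)"
  unfolding col_stochastic_def mat_mult_def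
proof (intro conjI allI impI)
  fix i j assume "i < n" "j < n"
  then show "0 \<le> (\<Sum>k<n. A i k * B k j)"
    using A B unfolding col_stochastic_def by (intro sum_nonneg) simp
next
  fix j assume "j < n"
  have "(\<Sum>i<n. \<Sum>k<n. A i k * B k j) = (\<Sum>k<n. (\<Sum>i<n. A i k) * B k j)"
    unfolding sum_distrib_right by (rule sum.swap)
  also have "\<dots> = 1"
    using A B \<open>j < n\<close> unfolding col_stochastic_def by simp
  finally show "(\<Sum>i<n. \<Sum>k<n. A i k * B k j) = 1" .
qed

lemma col_stochastic_prodP:
  "(\<And>k. k \<in> {1..m} \<Longrightarrow> col_stochastic n (C k)) \<Longrightarrow> col_stochastic n (prodP n C m)"
  by (induction m) (auto simp: col_stochastic_id_mat col_stochastic_mat_mult)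

lemma col_stochastic_aimd_mat_of:
  assumes \<alpha>: "\<forall>i<n. 0 < \<alpha> i" and bt: "\<forall>i<n. 0 \<le> bt i \<and> bt i \<le> 1"
  shows "col_stochastic n (aimd_mat_of n \<alpha> bt)"
  unfolding col_stochastic_def
proof (intro conjI allI impI)
  fix i j assume ij: "i < n" "j < n"
  have "0 < (\<Sum>k<n. \<alpha> k)" using \<alpha> ij by (intro sum_pos) auto
  then show "0 \<le> aimd_mat_of n \<alpha> bt i j"
    using \<alpha> bt ij unfolding aimd_mat_of_def aimd_entry_def
    by (auto intro!: add_nonneg_nonneg divide_nonneg_nonneg mult_nonneg_nonneg simp: less_imp_le)
next
  fix j assume j: "j < n"
  have "0 < (\<Sum>k<n. \<alpha> k)" using \<alpha> j by (intro sum_pos) auto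
  then show "(\<Sum>i<n. aimd_mat_of n \<alpha> bt i j) = 1"
    using j unfolding aimd_mat_of_def aimd_entry_def
    by (simp add: sum.distrib sum.delta sum_divide_distrib[symmetric] sum_distrib_right[symmetric])
qed

lemma col_stochastic_aimd:
  assumes "\<forall>i<n. 0 < \<alpha> i" "\<forall>i<n. 0 \<le> \<beta> i \<and> \<beta> i < 1" "is_aimd_matrix n \<alpha> \<beta> A"
  shows "col_stochastic n A"
proof -
  obtain bt where "\<forall>i<n. bt i = \<beta> i \<or> bt i = 1" and "A = aimd_mat_of n \<alpha> bt"
    using assms(3) unfolding is_aimd_matrix_def by auto
  with assms(1,2) show ?thesis
    by (metis col_stochastic_aimd_mat_of less_imp_le order_refl zero_le_one)
qed

lemma sum_mat_vec_col_stochastic: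
  assumes "col_stochastic n M"
  shows "(\<Sum>i<n. mat_vec n M z i) = (\<Sum>j<n. z j)"
proof -
  have "(\<Sum>i<n. mat_vec n M z i) = (\<Sum>j<n. (\<Sum>i<n. M i j) * z j)"
    unfolding mat_vec_def sum_distrib_right by (rule sum.swap)
  also have "\<dots> = (\<Sum>j<n. z j)"
    using assms unfolding col_stochastic_def by simp
  finally show ?thesis .
qed

lemma norm1_nonneg: "0 \<le> norm1 n v"
  unfolding norm1_def by (simp add: sum_nonneg)

lemma norm1_sum_le: "norm1 n (\<lambda>i. \<Sum>l\<in>L. g l i) \<le> (\<Sum>l\<in>L. norm1 n (g l))"
  unfolding norm1_def by (subst sum.swap) (intro sum_mono sum_abs)

lemma norm1_divide: "norm1 n (\<lambda>i. v i / c) = norm1 n v / \<bar>c\<bar>"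
  unfolding norm1_def by (simp add: sum_divide_distrib)

lemma norm1_mat_vec_le:
  assumes "\<forall>i<n. \<forall>j<n. 0 \<le> K i j" and "\<forall>j<n. (\<Sum>i<n. K i j) \<le> c"
  shows "norm1 n (mat_vec n K z) \<le> c * norm1 n z"
proof -
  have "norm1 n (mat_vec n K z) \<le> (\<Sum>i<n. \<Sum>j<n. K i j * \<bar>z j\<bar>)"
    unfolding norm1_def mat_vec_def
    by (intro sum_mono order.trans[OF sum_abs]) (simp add: abs_mult assms(1))
  also have "\<dots> = (\<Sum>j<n. (\<Sum>i<n. K i j) * \<bar>z j\<bar>)"
    unfolding sum_distrib_right by (rule sum.swap)
  also have "\<dots> \<le> (\<Sum>j<n. c * \<bar>z j\<bar>)"
    using assms(2) by (intro sum_mono mult_right_mono) auto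
  also have "\<dots> = c * norm1 n z"
    by (simp add: norm1_def sum_distrib_left)
  finally show ?thesis .
qed

lemma norm1_mat_vec_col_stochastic_le:
  "col_stochastic n M \<Longrightarrow> norm1 n (mat_vec n M z) \<le> norm1 n z"
  using norm1_mat_vec_le[of n M 1 z] unfolding col_stochastic_def by simp

text \<open>On vectors with zero sum the rank-one part \<open>\<alpha> (e - bt)\<^sup>T / e\<^sup>T\<alpha>\<close> of an AIMD
  matrix may be replaced by \<open>\<alpha> (b e - bt)\<^sup>T / e\<^sup>T\<alpha>\<close>, which gives a nonnegative matrix
  with all column sums equal to \<open>b\<close>.\<close>

lemma norm1_aimd_mat_of_zero_sum_le:
  assumes \<alpha>: "\<forall>i<n. 0 < \<alpha> i" and bt: "\<forall>j<n. 0 \<le> bt j \<and> bt j \<le> b"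
    and z: "(\<Sum>j<n. z j) = 0"
  shows "norm1 n (mat_vec n (aimd_mat_of n \<alpha> bt) z) \<le> b * norm1 n z"
proof (cases "n = 0")
  case True
  then show ?thesis by (simp add: norm1_def)
next
  case False
  define S where "S = (\<Sum>k<n. \<alpha> k)"
  have S: "0 < S" unfolding S_def using \<alpha> False by (intro sum_pos) auto
  define K where "K i j = (if i = j then bt i else 0) + \<alpha> i * (b - bt j) / S" for i j
  have "mat_vec n (aimd_mat_of n \<alpha> bt) z i = mat_vec n K z i" if "i < n" for i
  proof -
    have "mat_vec n (aimd_mat_of n \<alpha> bt) z i = (\<Sum>j<n. (K i j + \<alpha> i * (1 - b) / S) * z j)"
      unfolding mat_vec_def aimd_mat_of_def aimd_entry_def K_def S_def[symmetric]
      using that S by (intro sum.cong) (auto simp: field_simps)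
    also have "\<dots> = mat_vec n K z i + \<alpha> i * (1 - b) / S * (\<Sum>j<n. z j)"
      unfolding mat_vec_def by (simp add: distrib_right sum.distrib sum_distrib_left)
    finally show ?thesis using z by simp
  qed
  then have "norm1 n (mat_vec n (aimd_mat_of n \<alpha> bt) z) = norm1 n (mat_vec n K z)"
    unfolding norm1_def by simp
  also have "\<dots> \<le> b * norm1 n z"
  proof (rule norm1_mat_vec_le)
    show "\<forall>i<n. \<forall>j<n. 0 \<le> K i j"
      unfolding K_def using \<alpha> bt S
      by (auto intro!: add_nonneg_nonneg divide_nonneg_nonneg mult_nonneg_nonneg simp: less_imp_le)
    have "(\<Sum>i<n. K i j) = b" if "j < n" for j
      unfolding K_def S_def using that S[unfolded S_def]
      by (simp add: sum.distrib sum.delta sum_divide_distrib[symmetric] sum_distrib_right[symmetric])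
    then show "\<forall>j<n. (\<Sum>i<n. K i j) \<le> b" by simp
  qed
  finally show ?thesis .
qed

lemma norm1_prodP_zero_sum_le:
  assumes C: "\<And>k. col_stochastic n (C k)"
    and contr: "\<And>k x. (\<Sum>j<n. x j) = 0 \<Longrightarrow> norm1 n (mat_vec n (C k) x) \<le> b * norm1 n x"
    and b: "0 \<le> b" and z: "(\<Sum>j<n. z j) = 0"
  shows "norm1 n (mat_vec n (prodP n C m) z) \<le> b ^ m * norm1 n z"
proof (induction m)
  case 0
  then show ?case by (simp add: norm1_def mat_vec_id_mat)
next
  case (Suc m)
  have "(\<Sum>j<n. mat_vec n (prodP n C m) z j) = 0"
    using sum_mat_vec_col_stochastic[OF col_stochastic_prodP[OF C]] z by simp
  then have "norm1 n (mat_vec n (prodP n C (Suc m)) z) \<le> b * norm1 n (mat_vec n (prodP n C m) z)"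
    by (simp add: mat_vec_mat_mult contr)
  also have "\<dots> \<le> b * (b ^ m * norm1 n z)"
    using Suc.IH b by (rule mult_left_mono)
  finally show ?case by (simp add: mult.assoc)
qed

lemma Max_image_lessThan_bounds:
  fixes n :: nat and \<beta> :: "nat \<Rightarrow> real"
  assumes "n \<ge> 1" and "\<forall>i<n. 0 \<le> \<beta> i \<and> \<beta> i < 1"
  shows "0 \<le> Max (\<beta> ` {..<n}) \<and> Max (\<beta> ` {..<n}) < 1"
proof -
  have "Max (\<beta> ` {..<n}) \<in> \<beta> ` {..<n}"
    using assms(1) by (intro Max_in finite_imageI) (auto simp: lessThan_empty_iff)
  then show ?thesis using assms(2) by auto
qed

lemma norm1_prodP_drop_matrix_le:
  assumes n: "n \<ge> 1" and \<alpha>: "\<forall>i<n. 0 < \<alpha> i" and \<beta>: "\<forall>i<n. 0 \<le> \<beta> i \<and> \<beta> i < 1"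
    and z: "(\<Sum>j<n. z j) = 0"
  shows "norm1 n (mat_vec n (prodP n (\<lambda>_. drop_matrix n \<alpha> \<beta>) m) z) \<le> Max (\<beta> ` {..<n}) ^ m * norm1 n z"
proof (rule norm1_prodP_zero_sum_le)
  have \<beta>_le: "\<beta> j \<le> Max (\<beta> ` {..<n})" if "j < n" for j
    using that by (intro Max_ge) auto
  show "col_stochastic n (drop_matrix n \<alpha> \<beta>)" for k :: nat
    unfolding drop_matrix_def using \<alpha> \<beta> by (intro col_stochastic_aimd_mat_of) auto
  show "norm1 n (mat_vec n (drop_matrix n \<alpha> \<beta>) x) \<le> Max (\<beta> ` {..<n}) * norm1 n x"
    if "(\<Sum>j<n. x j) = 0" for x
    unfolding drop_matrix_def using \<alpha> \<beta> \<beta>_le that by (intro norm1_aimd_mat_of_zero_sum_le) auto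
  show "0 \<le> Max (\<beta> ` {..<n})"
    using Max_image_lessThan_bounds[OF n \<beta>] by simp
qed (fact z)

lemma mat_vec_diag2_upper:
  assumes "i < m"
  shows "mat_vec (2 * m) (diag2 m M1 M2) \<zeta> i = mat_vec m M1 \<zeta> i"
  unfolding mat_vec_def
  by (rule sum.mono_neutral_cong_right) (use assms in \<open>auto simp: diag2_def\<close>)

lemma mat_vec_diag2_lower:
  assumes "i < m"
  shows "mat_vec (2 * m) (diag2 m M1 M2) \<zeta> (m + i) = mat_vec m M2 (\<lambda>j. \<zeta> (m + j)) i"
proof -
  have "mat_vec (2 * m) (diag2 m M1 M2) \<zeta> (m + i) = (\<Sum>j\<in>{m..<2 * m}. M2 i (j - m) * \<zeta> j)"
    unfolding mat_vec_def
    by (rule sum.mono_neutral_cong_right) (use assms in \<open>auto simp: diag2_def\<close>)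
  also have "\<dots> = mat_vec m M2 (\<lambda>j. \<zeta> (m + j)) i"
    unfolding mat_vec_def
    by (rule sum.reindex_bij_witness[where i = "\<lambda>j. m + j" and j = "\<lambda>j. j - m"]) auto
  finally show ?thesis .
qed

lemma block_index_less:
  fixes k N n i :: nat
  assumes k: "k \<in> {1..N}" and i: "i < n"
  shows "(k - 1) * n + i < n * N"
proof -
  have "(k - 1) * n + i < (k - 1) * n + n" using i by simp
  also have "\<dots> = k * n" using k by (cases k) auto
  also have "\<dots> \<le> n * N" using k by simp
  finally show ?thesis .
qed

lemma mat_vec_gamma:
  assumes k: "k \<in> {1..N}" and i: "i < n"
  shows "mat_vec (n * N) (gamma n N C) x ((k - 1) * n + i)
           = (\<Sum>l<k. mat_vec n (prodP n C (N - l)) x i) / real k"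
proof -
  have row: "(k - 1) * n + i < n * N" using block_index_less[OF k i] .
  have "n \<le> n * N" using k by simp
  moreover have "((k - 1) * n + i) div n = k - 1" and "((k - 1) * n + i) mod n = i"
    using i by auto
  ultimately have "mat_vec (n * N) (gamma n N C) x ((k - 1) * n + i)
               = (\<Sum>j<n. (\<Sum>l<k. prodP n C (N - l) i j) / real k * x j)"
    unfolding mat_vec_def gamma_def
    using row i k by (intro sum.mono_neutral_cong_right) (auto simp: Let_def)
  also have "\<dots> = (\<Sum>l<k. mat_vec n (prodP n C (N - l)) x i) / real k"
    unfolding mat_vec_def
    by (simp add: sum_divide_distrib sum_distrib_right sum.swap[of _ "{..<k}"])
  finally show ?thesis .
qed

lemma z_block_Gamma:
  assumes "k \<in> {1..N}" and "i < n"
  shows "z_block n N (mat_vec (2 * n * N) (diag2 (n * N) (gamma n N C) (gamma n N D)) \<zeta>) c k i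
           = (\<Sum>l<k. mat_vec n (prodP n (if c then D else C) (N - l)) (z_block n N \<zeta> c 1) i) / real k"
proof -
  have row: "(k - 1) * n + i < n * N" using block_index_less[OF assms] .
  have dim: "2 * n * N = 2 * (n * N)" by simp
  show ?thesis
  proof (cases c)
    case True
    then show ?thesis
      using mat_vec_diag2_lower[OF row, of "gamma n N C" "gamma n N D" \<zeta>] mat_vec_gamma[OF assms]
      by (simp add: z_block_def dim add.assoc)
  next
    case False
    then show ?thesis
      using mat_vec_diag2_upper[OF row, of "gamma n N C" "gamma n N D" \<zeta>] mat_vec_gamma[OF assms]
      by (simp add: z_block_def dim)
  qed
qed

lemma normN1_eq_Max_image:
  "normN1 n N \<zeta> = Max ((\<lambda>(c, k). norm1 n (z_block n N \<zeta> c k)) ` (UNIV \<times> {1..N}))"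
  unfolding normN1_def by (rule arg_cong[where f = Max]) (auto simp: image_iff, blast)

lemma norm1_z_block_le_normN1: "k \<in> {1..N} \<Longrightarrow> norm1 n (z_block n N \<zeta> c k) \<le> normN1 n N \<zeta>"
  unfolding normN1_eq_Max_image by (rule Max_ge) auto

lemma normN1_le:
  "N \<ge> 1 \<Longrightarrow> (\<And>c k. k \<in> {1..N} \<Longrightarrow> norm1 n (z_block n N \<zeta> c k) \<le> M) \<Longrightarrow> normN1 n N \<zeta> \<le> M"
  unfolding normN1_eq_Max_image by (subst Max_le_iff) auto

lemma normN1_nonneg: "N \<ge> 1 \<Longrightarrow> 0 \<le> normN1 n N \<zeta>"
  using norm1_z_block_le_normN1[of 1 N n \<zeta> False] norm1_nonneg[of n] by (meson atLeastAtMost_iff order.trans order_refl)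

lemma mean_lessThan_le_of_mono:
  fixes a :: "nat \<Rightarrow> real"
  assumes a: "mono a" and k: "0 < k" "k \<le> N"
  shows "(\<Sum>l<k. a l) / k \<le> (\<Sum>l<N. a l) / N"
  using k(2)
proof (induction N rule: dec_induct)
  case (step m)
  define \<mu> where "\<mu> = (\<Sum>l<k. a l) / k"
  have "(\<Sum>l<k. a l) \<le> k * a m"
    using sum_bounded_above[of "{..<k}" a "a m"] monoD[OF a] step.hyps by force
  then have "\<mu> \<le> a m" unfolding \<mu>_def using k by (simp add: field_simps)
  moreover have "m * \<mu> \<le> (\<Sum>l<m. a l)"
    using step.IH k step.hyps unfolding \<mu>_def by (simp add: field_simps)
  ultimately have "(m + 1) * \<mu> \<le> (\<Sum>l<Suc m. a l)" by (simp add: algebra_simps)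
  then show ?case unfolding \<mu>_def[symmetric] by (simp add: field_simps)
qed simp

lemma sum_power_reverse: "(\<Sum>l<N. (b :: real) ^ (N - l)) = (\<Sum>i=1..N. b ^ i)"
  by (rule sum.reindex_bij_witness[where i = "\<lambda>i. N - i" and j = "\<lambda>l. N - l"]) auto

lemma norm1_z_block_Gamma_le:
  assumes k: "k \<in> {1..N}" and b: "0 \<le> b" "b \<le> 1"
    and P: "\<And>m. m \<le> N \<Longrightarrow>
      norm1 n (mat_vec n (prodP n (if c then D else C) m) (z_block n N \<zeta> c 1)) \<le> b ^ m * R"
  shows "norm1 n (z_block n N (mat_vec (2 * n * N) (diag2 (n * N) (gamma n N C) (gamma n N D)) \<zeta>) c k)
           \<le> (\<Sum>i=1..N. b ^ i) / real N * R"
proof -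
  let ?P = "\<lambda>l. mat_vec n (prodP n (if c then D else C) (N - l)) (z_block n N \<zeta> c 1)"
  have "norm1 n (z_block n N \<zeta> c 1) \<le> R"
    using P[of 0] by (simp add: norm1_def mat_vec_id_mat)
  then have R: "0 \<le> R" using norm1_nonneg order.trans by blast
  have mono: "mono (\<lambda>l. b ^ (N - l))"
    using b by (intro monoI power_decreasing) auto
  have "norm1 n (z_block n N (mat_vec (2 * n * N) (diag2 (n * N) (gamma n N C) (gamma n N D)) \<zeta>) c k)
          = norm1 n (\<lambda>i. (\<Sum>l<k. ?P l i) / real k)"
    unfolding norm1_def using z_block_Gamma[OF k] by simp
  also have "\<dots> = norm1 n (\<lambda>i. \<Sum>l<k. ?P l i) / real k"
    by (simp add: norm1_divide)
  also have "\<dots> \<le> (\<Sum>l<k. norm1 n (?P l)) / real k"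
    by (intro divide_right_mono norm1_sum_le) simp
  also have "\<dots> \<le> (\<Sum>l<k. b ^ (N - l) * R) / real k"
    by (intro divide_right_mono sum_mono P) auto
  also have "\<dots> = (\<Sum>l<k. b ^ (N - l)) / real k * R"
    by (simp add: sum_distrib_right)
  also have "\<dots> \<le> (\<Sum>l<N. b ^ (N - l)) / real N * R"
    using k by (intro mult_right_mono mean_lessThan_le_of_mono[OF mono] R) auto
  finally show ?thesis unfolding sum_power_reverse .
qed

lemma normN1_Gamma_le:
  assumes N: "N \<ge> 1" and b: "\<And>c. 0 \<le> b c" "\<And>c. b c \<le> 1"
    and P: "\<And>c m. m \<le> N \<Longrightarrow>
      norm1 n (mat_vec n (prodP n (if c then D else C) m) (z_block n N \<zeta> c 1)) \<le> b c ^ m * normN1 n N \<zeta>"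
  shows "normN1 n N (mat_vec (2 * n * N) (diag2 (n * N) (gamma n N C) (gamma n N D)) \<zeta>)
           \<le> max ((\<Sum>i=1..N. b False ^ i) / real N) ((\<Sum>i=1..N. b True ^ i) / real N) * normN1 n N \<zeta>"
proof (rule normN1_le[OF N])
  fix c k assume k: "k \<in> {1..N}"
  have "norm1 n (z_block n N (mat_vec (2 * n * N) (diag2 (n * N) (gamma n N C) (gamma n N D)) \<zeta>) c k)
          \<le> (\<Sum>i=1..N. b c ^ i) / real N * normN1 n N \<zeta>"
    using k b P by (rule norm1_z_block_Gamma_le)
  also have "\<dots> \<le> max ((\<Sum>i=1..N. b False ^ i) / real N) ((\<Sum>i=1..N. b True ^ i) / real N) * normN1 n N \<zeta>"
    using normN1_nonneg[OF N] by (intro mult_right_mono) (cases c, auto)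
  finally show "norm1 n (z_block n N (mat_vec (2 * n * N) (diag2 (n * N) (gamma n N C) (gamma n N D)) \<zeta>) c k)
          \<le> max ((\<Sum>i=1..N. b False ^ i) / real N) ((\<Sum>i=1..N. b True ^ i) / real N) * normN1 n N \<zeta>" .
qed

lemma Gamma_set_nonexpansive:
  assumes N: "N \<ge> 1" and AA: "\<forall>A\<in>AA. col_stochastic n A" and BB: "\<forall>B\<in>BB. col_stochastic n B"
    and \<Gamma>: "\<Gamma> \<in> Gamma_set n N AA BB"
  shows "normN1 n N (mat_vec (2 * n * N) \<Gamma> \<zeta>) \<le> normN1 n N \<zeta>"
proof -
  obtain C D where \<Gamma>_eq: "\<Gamma> = diag2 (n * N) (gamma n N C) (gamma n N D)"
    and C: "\<forall>k\<in>{1..N}. C k \<in> AA" and D: "\<forall>k\<in>{1..N}. D k \<in> BB"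
    using \<Gamma> unfolding Gamma_set_def by blast
  have "norm1 n (mat_vec n (prodP n (if c then D else C) m) (z_block n N \<zeta> c 1)) \<le> 1 ^ m * normN1 n N \<zeta>"
    if m: "m \<le> N" for c m
  proof -
    have "col_stochastic n (prodP n (if c then D else C) m)"
      using C D AA BB m by (intro col_stochastic_prodP) auto
    then have "norm1 n (mat_vec n (prodP n (if c then D else C) m) (z_block n N \<zeta> c 1))
                 \<le> norm1 n (z_block n N \<zeta> c 1)"
      by (rule norm1_mat_vec_col_stochastic_le)
    also have "\<dots> \<le> normN1 n N \<zeta>"
      using N by (intro norm1_z_block_le_normN1) auto
    finally show ?thesis by simp
  qed
  then have "normN1 n N (mat_vec (2 * n * N) \<Gamma> \<zeta>)
               \<le> max ((\<Sum>i=1..N. 1 ^ i) / real N) ((\<Sum>i=1..N. 1 ^ i) / real N) * normN1 n N \<zeta>"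
    unfolding \<Gamma>_eq using N by (intro normN1_Gamma_le[where b = "\<lambda>_. 1"]) auto
  then show ?thesis using N by simp
qed

lemma E_space_iff: "\<zeta> \<in> E_space n N \<longleftrightarrow> (\<forall>c. (\<Sum>i<n. z_block n N \<zeta> c 1 i) = 0)"
  unfolding E_space_def by (auto simp: all_bool_eq)

lemma Gamma_set_E_space_invariant:
  assumes N: "N \<ge> 1" and AA: "\<forall>A\<in>AA. col_stochastic n A" and BB: "\<forall>B\<in>BB. col_stochastic n B"
    and \<Gamma>: "\<Gamma> \<in> Gamma_set n N AA BB" and \<zeta>: "\<zeta> \<in> E_space n N"
  shows "mat_vec (2 * n * N) \<Gamma> \<zeta> \<in> E_space n N"
proof -
  obtain C D where \<Gamma>_eq: "\<Gamma> = diag2 (n * N) (gamma n N C) (gamma n N D)"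
    and C: "\<forall>k\<in>{1..N}. C k \<in> AA" and D: "\<forall>k\<in>{1..N}. D k \<in> BB"
    using \<Gamma> unfolding Gamma_set_def by blast
  have "(\<Sum>i<n. z_block n N (mat_vec (2 * n * N) \<Gamma> \<zeta>) c 1 i) = 0" for c
  proof -
    have "(\<Sum>i<n. z_block n N (mat_vec (2 * n * N) \<Gamma> \<zeta>) c 1 i)
            = (\<Sum>i<n. mat_vec n (prodP n (if c then D else C) N) (z_block n N \<zeta> c 1) i)"
      unfolding \<Gamma>_eq using N by (intro sum.cong) (simp_all add: z_block_Gamma)
    also have "\<dots> = (\<Sum>i<n. z_block n N \<zeta> c 1 i)"
      using C D AA BB by (intro sum_mat_vec_col_stochastic col_stochastic_prodP) auto
    also have "\<dots> = 0"
      using \<zeta> unfolding E_space_iff by blast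
    finally show ?thesis .
  qed
  then show ?thesis unfolding E_space_iff by blast
qed

lemma drop_Gamma_contraction:
  assumes n: "n \<ge> 1" and N: "N \<ge> 1"
    and \<alpha>a: "\<forall>i<n. 0 < \<alpha>a i" and \<alpha>b: "\<forall>i<n. 0 < \<alpha>b i"
    and \<beta>a: "\<forall>i<n. 0 \<le> \<beta>a i \<and> \<beta>a i < 1" and \<beta>b: "\<forall>i<n. 0 \<le> \<beta>b i \<and> \<beta>b i < 1"
    and \<zeta>: "\<zeta> \<in> E_space n N"
  shows "normN1 n N (mat_vec (2 * n * N) (diag2 (n * N) (gamma n N (\<lambda>_. drop_matrix n \<alpha>a \<beta>a))
                                                 (gamma n N (\<lambda>_. drop_matrix n \<alpha>b \<beta>b))) \<zeta>)
           \<le> max ((\<Sum>i=1..N. Max (\<beta>a ` {..<n}) ^ i) / real N) ((\<Sum>i=1..N. Max (\<beta>b ` {..<n}) ^ i) / real N)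
               * normN1 n N \<zeta>"
proof -
  define b where "b c = (if c then Max (\<beta>b ` {..<n}) else Max (\<beta>a ` {..<n}))" for c
  have b: "0 \<le> b c \<and> b c < 1" for c
    unfolding b_def using Max_image_lessThan_bounds[OF n] \<beta>a \<beta>b by simp
  have "norm1 n (mat_vec n (prodP n (if c then (\<lambda>_. drop_matrix n \<alpha>b \<beta>b) else (\<lambda>_. drop_matrix n \<alpha>a \<beta>a)) m)
                      (z_block n N \<zeta> c 1)) \<le> b c ^ m * normN1 n N \<zeta>" for c m
  proof -
    have "(\<Sum>i<n. z_block n N \<zeta> c 1 i) = 0" using \<zeta> unfolding E_space_iff by blast
    then have "norm1 n (mat_vec n (prodP n (if c then (\<lambda>_. drop_matrix n \<alpha>b \<beta>b) else (\<lambda>_. drop_matrix n \<alpha>a \<beta>a)) m)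
                      (z_block n N \<zeta> c 1)) \<le> b c ^ m * norm1 n (z_block n N \<zeta> c 1)"
      unfolding b_def
      by (cases c) (auto intro: norm1_prodP_drop_matrix_le[OF n \<alpha>a \<beta>a] norm1_prodP_drop_matrix_le[OF n \<alpha>b \<beta>b])
    also have "\<dots> \<le> b c ^ m * normN1 n N \<zeta>"
      using b N by (intro mult_left_mono norm1_z_block_le_normN1) auto
    finally show ?thesis .
  qed
  then show ?thesis
    using normN1_Gamma_le[OF N, of b] b by (simp add: b_def less_imp_le)
qed

lemma mean_powers_lt_1:
  fixes b :: real
  assumes "0 \<le> b" "b < 1" "N \<ge> 1"
  shows "(\<Sum>i=1..N. b ^ i) / real N < 1"
proof -
  have "(\<Sum>i=1..N. b ^ i) < (\<Sum>i=1..N. 1)"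
  proof (rule sum_strict_mono)
    fix i assume "i \<in> {1..N}"
    then have "b ^ i \<le> b" using assms by (intro power_decreasing[of 1, simplified]) auto
    then show "b ^ i < 1" using assms by simp
  qed (use assms in auto)
  then show ?thesis using assms by simp
qed

theorem lemma1:
  fixes n N :: nat
    and \<alpha>a \<alpha>b \<beta>a \<beta>b :: "nat \<Rightarrow> real"
    and AA BB :: "(nat \<Rightarrow> nat \<Rightarrow> real) set"
  assumes "n \<ge> 1" and "N \<ge> 1"
    and "\<forall>i<n. \<alpha>a i > 0" and "\<forall>i<n. \<alpha>b i > 0"
    and "\<forall>i<n. 0 \<le> \<beta>a i \<and> \<beta>a i < 1" and "\<forall>i<n. 0 \<le> \<beta>b i \<and> \<beta>b i < 1"
    and "finite AA" and "finite BB"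
    and "\<forall>A\<in>AA. is_aimd_matrix n \<alpha>a \<beta>a A"
    and "\<forall>B\<in>BB. is_aimd_matrix n \<alpha>b \<beta>b B"
    and "drop_matrix n \<alpha>a \<beta>a \<in> AA"
    and "drop_matrix n \<alpha>b \<beta>b \<in> BB"
  shows "(\<forall>\<Gamma>\<in>Gamma_set n N AA BB. \<forall>\<zeta>.
            normN1 n N (mat_vec (2 * n * N) \<Gamma> \<zeta>) \<le> normN1 n N \<zeta>)
       \<and> (\<forall>\<Gamma>\<in>Gamma_set n N AA BB. \<forall>\<zeta>\<in>E_space n N.
            mat_vec (2 * n * N) \<Gamma> \<zeta> \<in> E_space n N)
       \<and> (let \<Gamma>1 = diag2 (n * N) (gamma n N (\<lambda>_. drop_matrix n \<alpha>a \<beta>a))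
                                 (gamma n N (\<lambda>_. drop_matrix n \<alpha>b \<beta>b));
              ba = Max (\<beta>a ` {..<n});
              bb = Max (\<beta>b ` {..<n});
              q = max ((\<Sum>i=1..N. ba ^ i) / real N) ((\<Sum>j=1..N. bb ^ j) / real N)
          in q < 1 \<and>
             (\<forall>\<zeta>\<in>E_space n N. normN1 n N (mat_vec (2 * n * N) \<Gamma>1 \<zeta>) \<le> q * normN1 n N \<zeta>))"
proof -
  have AA: "\<forall>A\<in>AA. col_stochastic n A" and BB: "\<forall>B\<in>BB. col_stochastic n B"
    using assms(3-6,9,10) col_stochastic_aimd by blast+
  have "max ((\<Sum>i=1..N. Max (\<beta>a ` {..<n}) ^ i) / real N) ((\<Sum>i=1..N. Max (\<beta>b ` {..<n}) ^ i) / real N) < 1"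
    using Max_image_lessThan_bounds[OF assms(1) assms(5)] Max_image_lessThan_bounds[OF assms(1) assms(6)]
      mean_powers_lt_1 assms(2) by simp
  then show ?thesis
    unfolding Let_def
    using Gamma_set_nonexpansive[OF assms(2) AA BB] Gamma_set_E_space_invariant[OF assms(2) AA BB]
      drop_Gamma_contraction[OF assms(1-6)]
    by blast
qed

end
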